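(* Let $G$ be a finite connected graph with vertices $u,v$ such that $uv\in E(G)$, $\deg_G(u)\ge 2$ and $\deg_G(v)=1$. Let $G_v$ be obtained from $G$ by adding a new vertex $x$ and the edge $ux$. Then $\mathrm{cat}(G_v,a)=\mathrm{cat}(G,a)$ for all $a\in V(G)$, and $\mathrm{cat}(G_v,x)=1$. In particular $\mathrm{cat}(G_v)=\mathrm{cat}(G)$.
   Context: Cat Herding is played on a simple graph $G$. The cat first places its token on a vertex. Then the players alternate, the herder moving first: the herder deletes one edge of the current graph, and then, unless the cat's current vertex has degree $0$ in the current graph, the cat moves its token along a path with at least one edge in the current graph to a different vertex. The cat is captured when its vertex has degree $0$ in the current graph, and the game ends; the score is the number of edges deleted. For a finite graph $G$ and $v\in V(G)$, $\mathrm{cat}(G,v)$ is the score under optimal play (herder minimizing, cat maximizing) when the cat starts at $v$, and $\mathrm{cat}(G)=\max_{v}\mathrm{cat}(G,v)$. *)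

theory Defs
  imports Main
begin

definition simple_graph :: "'a set \<Rightarrow> 'a set set \<Rightarrow> bool" where
  "simple_graph V E \<longleftrightarrow> finite V \<and>
     (\<forall>e\<in>E. \<exists>x y. x \<noteq> y \<and> x \<in> V \<and> y \<in> V \<and> e = {x, y})"

definition adj_rel :: "'a set set \<Rightarrow> ('a \<times> 'a) set" where
  "adj_rel E = {(x, y). x \<noteq> y \<and> {x, y} \<in> E}"

definition connected_graph :: "'a set \<Rightarrow> 'a set set \<Rightarrow> bool" where
  "connected_graph V E \<longleftrightarrow> (\<forall>a\<in>V. \<forall>b\<in>V. (a, b) \<in> (adj_rel E)\<^sup>*)"

definition degree :: "'a set set \<Rightarrow> 'a \<Rightarrow> nat" where
  "degree E a = card {b. b \<noteq> a \<and> {a, b} \<in> E}"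

(* Game value with fuel n = number of remaining edges. If c is isolated, score 0.
   Otherwise herder deletes some e \<in> F (score +1); then the cat moves to some
   vertex c' \<noteq> c reachable from c in F - {e} (if none exists, i.e. c isolated, the
   cat is captured and nothing more is added). *)
fun catn :: "nat \<Rightarrow> 'a set set \<Rightarrow> 'a \<Rightarrow> nat" where
  "catn 0 F c = 0"
| "catn (Suc n) F c =
     (if degree F c = 0 then 0
      else Min ((\<lambda>e. 1 + Max (insert 0
              ((\<lambda>c'. catn n (F - {e}) c') `
                 {c'. c' \<noteq> c \<and> (c, c') \<in> (adj_rel (F - {e}))\<^sup>*}))) ` F))"

definition cat_at :: "'a set set \<Rightarrow> 'a \<Rightarrow> nat" where
  "cat_at E v = catn (card E) E v"

definition cat_num :: "'a set \<Rightarrow> 'a set set \<Rightarrow> nat" where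
  "cat_num V E = Max (cat_at E ` V)"

end

theory Submission
  imports Defs
begin

text \<open>
  Adding edges never lowers the cat's score, so only \<open>cat(G\<^sub>v, a) \<le> cat(G, a)\<close> needs an
  argument. In \<open>G\<^sub>v\<close> the herder follows an optimal strategy for \<open>G\<close>, except that where it
  deletes the leaf edge \<open>uv\<close> he deletes another edge \<open>uw\<close> at \<open>u\<close>; this is never worse for
  him, because a pendant edge at \<open>u\<close> is worth at most as much to the cat as any other edge
  at \<open>u\<close>. A cat that runs to the new leaf \<open>x\<close> is captured by the next deletion, a score it
  could already secure in \<open>G\<close> by running to \<open>u\<close> or a neighbour of \<open>u\<close>. Once \<open>u\<close> has lost
  every neighbour but \<open>v\<close>, the edges \<open>uv\<close> and \<open>ux\<close> form a component in which every
  position is worth \<open>1\<close>, and from every other component the new edge is unreachable.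
\<close>

definition simple_edges :: "'a set set \<Rightarrow> bool" where
  "simple_edges F \<longleftrightarrow> finite F \<and> (\<forall>e\<in>F. \<exists>a b. a \<noteq> b \<and> e = {a, b})"

definition isolated :: "'a set set \<Rightarrow> 'a \<Rightarrow> bool" where
  "isolated F c \<longleftrightarrow> (\<forall>e\<in>F. c \<notin> e)"

definition pendant_edge :: "'a set set \<Rightarrow> 'a \<Rightarrow> 'a \<Rightarrow> bool" where
  "pendant_edge F u v \<longleftrightarrow> u \<noteq> v \<and> {u, v} \<in> F \<and> (\<forall>e\<in>F. v \<in> e \<longrightarrow> e = {u, v})"

definition cat_moves :: "'a set set \<Rightarrow> 'a \<Rightarrow> 'a set" where
  "cat_moves F c = {c'. c' \<noteq> c \<and> (c, c') \<in> (adj_rel F)\<^sup>*}"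

text \<open>The score still to come when the cat at \<open>c\<close> is about to move in \<open>F\<close>; the inserted
  \<open>0\<close> is the score of a cat without a move, i.e. a captured one.\<close>
definition cat_reply :: "'a set set \<Rightarrow> 'a \<Rightarrow> nat" where
  "cat_reply F c = Max (insert 0 (cat_at F ` cat_moves F c))"

lemma simple_edges_subset: "simple_edges G \<Longrightarrow> F \<subseteq> G \<Longrightarrow> simple_edges F"
  by (auto simp: simple_edges_def intro: finite_subset)

lemma simple_edges_insert: "simple_edges F \<Longrightarrow> a \<noteq> b \<Longrightarrow> simple_edges (insert {a, b} F)"
  by (auto simp: simple_edges_def)

lemma simple_edges_Diff: "simple_edges F \<Longrightarrow> simple_edges (F - A)"
  by (auto simp: simple_edges_def)

lemma finite_Union_simple_edges: "simple_edges F \<Longrightarrow> finite (\<Union>F)"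
  by (auto simp: simple_edges_def)

lemma card_delete_edge_less: "simple_edges F \<Longrightarrow> e \<in> F \<Longrightarrow> card (F - {e}) < card F"
  unfolding simple_edges_def by (blast intro: card_Diff1_less)

lemma not_isolated_neighbour:
  assumes "simple_edges F" "\<not> isolated F c"
  obtains b where "b \<noteq> c" "{c, b} \<in> F"
  using assms unfolding simple_edges_def isolated_def
  by (metis insert_commute insert_iff singletonD)

lemma simple_graph_simple_edges:
  assumes "simple_graph V E"
  shows "simple_edges E" "\<Union>E \<subseteq> V"
proof -
  show "\<Union>E \<subseteq> V" using assms by (fastforce simp: simple_graph_def)
  then have "E \<subseteq> Pow V" by blast
  then have "finite E" using assms by (simp add: simple_graph_def finite_subset)
  with assms show "simple_edges E" unfolding simple_graph_def simple_edges_def by blast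
qed

lemma degree_ge_2_other_neighbour:
  assumes "2 \<le> degree E u"
  obtains w where "{u, w} \<in> E" "w \<noteq> u" "w \<noteq> v"
proof -
  have "\<not> {b. b \<noteq> u \<and> {u, b} \<in> E} \<subseteq> {v}"
  proof
    assume "{b. b \<noteq> u \<and> {u, b} \<in> E} \<subseteq> {v}"
    then have "degree E u \<le> card {v}" unfolding degree_def by (rule card_mono[rotated]) simp
    then show False using assms by simp
  qed
  then show ?thesis using that by blast
qed

subsection \<open>Reachability\<close>

lemma adj_rel_iff [simp]: "(a, b) \<in> adj_rel F \<longleftrightarrow> a \<noteq> b \<and> {a, b} \<in> F"
  by (simp add: adj_rel_def)

lemma reach_mono: "F \<subseteq> G \<Longrightarrow> (c, y) \<in> (adj_rel F)\<^sup>* \<Longrightarrow> (c, y) \<in> (adj_rel G)\<^sup>*"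
  by (rule rtrancl_mono[THEN subsetD, of "adj_rel F"]) (auto simp: adj_rel_def)

lemma reach_sym: "(c, y) \<in> (adj_rel F)\<^sup>* \<Longrightarrow> (y, c) \<in> (adj_rel F)\<^sup>*"
proof -
  have "sym (adj_rel F)" by (auto simp: sym_def insert_commute)
  then show "(c, y) \<in> (adj_rel F)\<^sup>* \<Longrightarrow> (y, c) \<in> (adj_rel F)\<^sup>*"
    by (meson sym_rtrancl symD)
qed

lemma reach_insert_edge:
  assumes "a \<noteq> b"
  shows "(c, y) \<in> (adj_rel (insert {a, b} F))\<^sup>* \<longleftrightarrow>
    (c, y) \<in> (adj_rel F)\<^sup>* \<or>
    (c, a) \<in> (adj_rel F)\<^sup>* \<and> (b, y) \<in> (adj_rel F)\<^sup>* \<or>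
    (c, b) \<in> (adj_rel F)\<^sup>* \<and> (a, y) \<in> (adj_rel F)\<^sup>*"
proof -
  have "adj_rel (insert {a, b} F) = insert (a, b) (insert (b, a) (adj_rel F))"
    using assms by (auto simp: adj_rel_def doubleton_eq_iff)
  then show ?thesis
    by (simp add: rtrancl_insert) (meson rtrancl_trans)
qed

lemma reach_fresh:
  assumes "x \<notin> \<Union>F"
  shows "(x, y) \<in> (adj_rel F)\<^sup>* \<longleftrightarrow> y = x" and "(y, x) \<in> (adj_rel F)\<^sup>* \<longleftrightarrow> y = x"
proof -
  have "(x, z) \<notin> adj_rel F" "(z, x) \<notin> adj_rel F" for z
    using assms by auto
  then show "(x, y) \<in> (adj_rel F)\<^sup>* \<longleftrightarrow> y = x" "(y, x) \<in> (adj_rel F)\<^sup>* \<longleftrightarrow> y = x"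
    by (metis converse_rtranclE rtrancl.rtrancl_refl, metis rtranclE rtrancl.rtrancl_refl)
qed

lemma reach_insert_pendant:
  assumes "x \<notin> \<Union>F" "u \<noteq> x" "c \<noteq> x"
  shows "(c, y) \<in> (adj_rel (insert {u, x} F))\<^sup>* \<longleftrightarrow>
    (c, y) \<in> (adj_rel F)\<^sup>* \<or> y = x \<and> (c, u) \<in> (adj_rel F)\<^sup>*"
  using assms by (auto simp: reach_insert_edge reach_fresh)

lemma reach_isolated_edge:
  assumes "pendant_edge F u v" "pendant_edge F v u" "(u, y) \<in> (adj_rel F)\<^sup>*"
  shows "y \<in> {u, v}"
  using assms(3)
proof induction
  case (step y z)
  then have "{y, z} \<in> F" "y = u \<or> y = v" by auto
  then have "{y, z} = {u, v} \<or> {y, z} = {v, u}"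
    using assms(1,2) unfolding pendant_edge_def by (metis insertI1)
  then show ?case by (auto simp: doubleton_eq_iff)
qed simp

lemma cat_moves_mono: "F \<subseteq> G \<Longrightarrow> cat_moves F c \<subseteq> cat_moves G c"
  using reach_mono by (auto simp: cat_moves_def)

lemma cat_moves_in_edge:
  assumes "d \<in> cat_moves F c"
  obtains y where "{y, d} \<in> F"
proof -
  from assms have "(c, d) \<in> (adj_rel F)\<^sup>*" "d \<noteq> c" by (auto simp: cat_moves_def)
  then obtain y where "(y, d) \<in> adj_rel F" by (metis rtranclE)
  then show ?thesis using that by auto
qed

lemma not_isolated_if_cat_moves: "d \<in> cat_moves F c \<Longrightarrow> \<not> isolated F d"
  by (metis cat_moves_in_edge insertI1 insert_commute isolated_def)

lemma cat_moves_subset_Union: "cat_moves F c \<subseteq> \<Union>F"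
  by (metis UnionI cat_moves_in_edge insertCI subsetI)

lemma finite_cat_moves: "simple_edges F \<Longrightarrow> finite (cat_moves F c)"
  using cat_moves_subset_Union finite_Union_simple_edges by (metis finite_subset)

lemma cat_moves_isolated: "isolated F c \<Longrightarrow> cat_moves F c = {}"
  unfolding cat_moves_def isolated_def
  by (metis (mono_tags, lifting) adj_rel_iff converse_rtranclE empty_Collect_eq insertI1)

lemma neighbour_in_cat_moves: "b \<noteq> c \<Longrightarrow> {c, b} \<in> F \<Longrightarrow> b \<in> cat_moves F c"
  by (auto simp: cat_moves_def)

lemma pendant_edge_insert: "pendant_edge F u v \<Longrightarrow> v \<notin> e \<Longrightarrow> pendant_edge (insert e F) u v"
  by (auto simp: pendant_edge_def)

lemma pendant_edge_insert_fresh: "x \<notin> \<Union>F \<Longrightarrow> u \<noteq> x \<Longrightarrow> pendant_edge (insert {u, x} F) u x"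
  by (auto simp: pendant_edge_def)

lemma pendant_edge_Diff: "pendant_edge F u v \<Longrightarrow> e \<noteq> {u, v} \<Longrightarrow> pendant_edge (F - {e}) u v"
  by (auto simp: pendant_edge_def)

lemma pendant_edge_not_isolated: "pendant_edge F u v \<Longrightarrow> \<not> isolated F u \<and> \<not> isolated F v"
  by (auto simp: pendant_edge_def isolated_def)

lemma pendant_edge_if_unique_neighbour:
  assumes "simple_edges F" "{u, v} \<in> F" "u \<noteq> v" "\<And>w. {v, w} \<in> F \<Longrightarrow> w \<noteq> v \<Longrightarrow> w = u"
  shows "pendant_edge F u v"
  unfolding pendant_edge_def
proof (intro conjI ballI impI assms(2,3))
  fix e assume "e \<in> F" "v \<in> e"
  then obtain w where "e = {v, w}" "w \<noteq> v"
    using assms(1) unfolding simple_edges_def by (metis doubleton_eq_iff insertE singletonD)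
  then show "e = {u, v}" using assms(4) \<open>e \<in> F\<close> by (simp add: insert_commute)
qed

lemma pendant_edge_if_degree_1:
  assumes "simple_edges E" "{u, v} \<in> E" "degree E v = 1"
  shows "pendant_edge E u v"
proof -
  have "u \<noteq> v" using assms(1,2) unfolding simple_edges_def by (metis doubleton_eq_iff)
  have "card {b. b \<noteq> v \<and> {v, b} \<in> E} = 1" using assms(3) by (simp add: degree_def)
  moreover have "u \<in> {b. b \<noteq> v \<and> {v, b} \<in> E}" using assms(2) \<open>u \<noteq> v\<close> by (simp add: insert_commute)
  ultimately have neighbours: "{b. b \<noteq> v \<and> {v, b} \<in> E} = {u}" by (metis card_1_singletonE singletonD)
  show ?thesis
  proof (rule pendant_edge_if_unique_neighbour[OF assms(1,2) \<open>u \<noteq> v\<close>])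
    show "w = u" if "{v, w} \<in> E" "w \<noteq> v" for w using that neighbours by blast
  qed
qed

subsection \<open>The game recursion\<close>

lemma cat_at_rec:
  assumes "simple_edges F"
  shows "cat_at F c =
    (if isolated F c then 0 else Min ((\<lambda>e. 1 + cat_reply (F - {e}) c) ` F))"
proof (cases "isolated F c")
  case True
  then have no_neighbours: "{b. b \<noteq> c \<and> {c, b} \<in> F} = {}" by (auto simp: isolated_def)
  have "degree F c = 0" unfolding degree_def no_neighbours by simp
  then show ?thesis using True by (cases "card F") (simp_all add: cat_at_def)
next
  case False
  then obtain b where b: "b \<noteq> c" "{c, b} \<in> F" using assms by (metis not_isolated_neighbour)
  have "finite F" using assms by (simp add: simple_edges_def)
  then obtain n where n: "card F = Suc n" using b(2) by (cases "card F") auto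
  have "finite {b. b \<noteq> c \<and> {c, b} \<in> F}"
    using finite_Union_simple_edges[OF assms] by (rule finite_subset[rotated]) auto
  then have "degree F c \<noteq> 0" using b by (auto simp: degree_def)
  moreover have "card (F - {e}) = n" if "e \<in> F" for e using n that \<open>finite F\<close> by simp
  then have "(\<lambda>e. 1 + Max (insert 0 ((\<lambda>c'. catn n (F - {e}) c') `
                 {c'. c' \<noteq> c \<and> (c, c') \<in> (adj_rel (F - {e}))\<^sup>*}))) ` F
        = (\<lambda>e. 1 + cat_reply (F - {e}) c) ` F"
    by (intro image_cong) (simp_all add: cat_reply_def cat_at_def cat_moves_def)
  ultimately show ?thesis using False by (simp add: cat_at_def n)
qed

lemma cat_at_isolated: "simple_edges F \<Longrightarrow> isolated F c \<Longrightarrow> cat_at F c = 0"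
  by (simp add: cat_at_rec)

lemma cat_at_le_delete: "simple_edges F \<Longrightarrow> e \<in> F \<Longrightarrow> cat_at F c \<le> 1 + cat_reply (F - {e}) c"
  by (simp add: cat_at_rec simple_edges_def)

lemma cat_at_optimal_delete:
  assumes "simple_edges F" "\<not> isolated F c"
  obtains e where "e \<in> F" "cat_at F c = 1 + cat_reply (F - {e}) c"
proof -
  from assms have "F \<noteq> {}" "finite F" by (auto simp: isolated_def simple_edges_def)
  then have "Min ((\<lambda>e. 1 + cat_reply (F - {e}) c) ` F) \<in> (\<lambda>e. 1 + cat_reply (F - {e}) c) ` F"
    by (intro Min_in) auto
  then show ?thesis using assms that by (auto simp: cat_at_rec)
qed

lemma cat_at_ge_1: "simple_edges F \<Longrightarrow> \<not> isolated F c \<Longrightarrow> 1 \<le> cat_at F c"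
  by (metis cat_at_optimal_delete le_add1)

lemma cat_at_pendant:
  assumes "simple_edges F" "pendant_edge F u v"
  shows "cat_at F v = 1"
proof -
  have "{u, v} \<in> F" using assms(2) by (simp add: pendant_edge_def)
  have "isolated (F - {{u, v}}) v" using assms(2) unfolding pendant_edge_def isolated_def by blast
  then have "cat_reply (F - {{u, v}}) v = 0" by (simp add: cat_reply_def cat_moves_isolated)
  then have "cat_at F v \<le> 1" using cat_at_le_delete[OF assms(1) \<open>{u, v} \<in> F\<close>, of v] by simp
  moreover have "1 \<le> cat_at F v"
    using cat_at_ge_1[OF assms(1)] pendant_edge_not_isolated[OF assms(2)] by blast
  ultimately show ?thesis by simp
qed

lemma cat_reply_le_dominated:
  assumes "simple_edges A" "simple_edges B"
    and "\<And>y. y \<in> cat_moves A c \<Longrightarrow> \<exists>b\<in>cat_moves B c. cat_at A y \<le> cat_at B b"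
  shows "cat_reply A c \<le> cat_reply B c"
proof -
  have "cat_at A y \<le> cat_reply B c" if y: "y \<in> cat_moves A c" for y
  proof -
    obtain b where "b \<in> cat_moves B c" "cat_at A y \<le> cat_at B b" using assms(3)[OF y] by blast
    moreover have "cat_at B b \<le> cat_reply B c" if "b \<in> cat_moves B c" for b
      unfolding cat_reply_def using finite_cat_moves[OF assms(2)] that by (intro Max_ge) auto
    ultimately show ?thesis by (meson order_trans)
  qed
  then show ?thesis
    using finite_cat_moves[OF assms(1)] unfolding cat_reply_def[of A] by (intro Max.boundedI) auto
qed

lemma cat_reply_le_pointwise:
  assumes "simple_edges A" "simple_edges B" "cat_moves A c \<subseteq> cat_moves B c"
    and "\<And>y. y \<in> cat_moves A c \<Longrightarrow> cat_at A y \<le> cat_at B y"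
  shows "cat_reply A c \<le> cat_reply B c"
  using assms by (intro cat_reply_le_dominated) auto

subsection \<open>Adding edges\<close>

lemma cat_at_mono:
  assumes "simple_edges G" "F \<subseteq> G"
  shows "cat_at F c \<le> cat_at G c"
  using assms
proof (induction "card G" arbitrary: G F c rule: less_induct)
  case less
  note G = less.prems(1)
  have F: "simple_edges F" using less.prems by (rule simple_edges_subset)
  show ?case
  proof (cases "isolated F c")
    case True
    then show ?thesis by (simp add: cat_at_isolated[OF F])
  next
    case False
    then have "\<not> isolated G c" using less.prems(2) by (auto simp: isolated_def)
    then obtain f where f: "f \<in> G" "cat_at G c = 1 + cat_reply (G - {f}) c"
      by (rule cat_at_optimal_delete[OF G])
    obtain f' where f': "f' \<in> F" "F - {f'} \<subseteq> G - {f}"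
    proof (cases "f \<in> F")
      case True
      then show ?thesis using that less.prems(2) by blast
    next
      case False
      obtain f' where "f' \<in> F" using \<open>\<not> isolated F c\<close> by (auto simp: isolated_def)
      then show ?thesis using that less.prems(2) False by blast
    qed
    have IH: "cat_at (F - {f'}) y \<le> cat_at (G - {f}) y" for y
      using less.hyps[OF card_delete_edge_less[OF G f(1)] simple_edges_Diff[OF G] f'(2)] .
    have "cat_reply (F - {f'}) c \<le> cat_reply (G - {f}) c"
      by (rule cat_reply_le_pointwise) (simp_all add: IH F G simple_edges_Diff cat_moves_mono f'(2))
    then show ?thesis using cat_at_le_delete[OF F f'(1), of c] f(2) by simp
  qed
qed

lemma cat_reply_insert_unreachable_edge:
  assumes "simple_edges S" "a \<noteq> b"
    and "(d, a) \<notin> (adj_rel S)\<^sup>*" "(d, b) \<notin> (adj_rel S)\<^sup>*"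
    and "\<And>y. (y, a) \<notin> (adj_rel S)\<^sup>* \<Longrightarrow> (y, b) \<notin> (adj_rel S)\<^sup>* \<Longrightarrow>
      cat_at (insert {a, b} S) y \<le> cat_at S y"
  shows "cat_reply (insert {a, b} S) d \<le> cat_reply S d"
proof (rule cat_reply_le_pointwise)
  show "cat_moves (insert {a, b} S) d \<subseteq> cat_moves S d"
    using assms(2-4) by (auto simp: cat_moves_def reach_insert_edge)
  fix y assume "y \<in> cat_moves (insert {a, b} S) d"
  then have "(d, y) \<in> (adj_rel S)\<^sup>*"
    using assms(2-4) by (auto simp: cat_moves_def reach_insert_edge)
  then have "(y, a) \<notin> (adj_rel S)\<^sup>*" "(y, b) \<notin> (adj_rel S)\<^sup>*"
    using assms(3,4) by (meson rtrancl_trans)+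
  then show "cat_at (insert {a, b} S) y \<le> cat_at S y" by (rule assms(5))
qed (use assms(1,2) simple_edges_insert in auto)

lemma cat_at_insert_unreachable_edge:
  assumes "simple_edges S" "a \<noteq> b" "(d, a) \<notin> (adj_rel S)\<^sup>*" "(d, b) \<notin> (adj_rel S)\<^sup>*"
  shows "cat_at (insert {a, b} S) d \<le> cat_at S d"
  using assms
proof (induction "card S" arbitrary: S d rule: less_induct)
  case less
  note S = less.prems(1)
  have "d \<noteq> a" "d \<noteq> b" using less.prems(3,4) by auto
  show ?case
  proof (cases "{a, b} \<in> S \<or> isolated S d")
    case True
    then consider "{a, b} \<in> S" | "isolated (insert {a, b} S) d"
      using \<open>d \<noteq> a\<close> \<open>d \<noteq> b\<close> by (auto simp: isolated_def)
    then show ?thesis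
      by cases (simp_all add: insert_absorb cat_at_isolated simple_edges_insert S less.prems(2))
  next
    case False
    then obtain f where f: "f \<in> S" "cat_at S d = 1 + cat_reply (S - {f}) d"
      using S by (metis cat_at_optimal_delete)
    have S': "simple_edges (S - {f})" using S by (rule simple_edges_Diff)
    have "(d, a) \<notin> (adj_rel (S - {f}))\<^sup>*" "(d, b) \<notin> (adj_rel (S - {f}))\<^sup>*"
      using less.prems(3,4) reach_mono[of "S - {f}" S] by blast+
    then have "cat_reply (insert {a, b} (S - {f})) d \<le> cat_reply (S - {f}) d"
      using less.hyps[OF card_delete_edge_less[OF S f(1)] S' less.prems(2)]
      by (intro cat_reply_insert_unreachable_edge S' less.prems(2))
    moreover have "insert {a, b} S - {f} = insert {a, b} (S - {f})" using False f(1) by auto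
    ultimately show ?thesis
      using cat_at_le_delete[of "insert {a, b} S" f d] f S less.prems(2)
      by (simp add: simple_edges_insert)
  qed
qed

subsection \<open>Pendant edges\<close>

lemma cat_reply_insert_pendant:
  assumes T: "simple_edges T" and ST: "S \<subseteq> T"
    and x: "x \<notin> \<Union>S" "u \<noteq> x" "d \<noteq> x" and u: "\<not> isolated T u"
    and le: "\<And>y. y \<in> cat_moves (insert {u, x} S) d \<Longrightarrow> y \<noteq> x \<Longrightarrow>
      cat_at (insert {u, x} S) y \<le> cat_at T y"
  shows "cat_reply (insert {u, x} S) d \<le> cat_reply T d"
proof (rule cat_reply_le_dominated[OF _ T])
  show S': "simple_edges (insert {u, x} S)"
    using simple_edges_subset[OF T ST] x(2) by (rule simple_edges_insert)
  fix y assume y: "y \<in> cat_moves (insert {u, x} S) d"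
  then have reach: "(d, y) \<in> (adj_rel S)\<^sup>* \<or> y = x \<and> (d, u) \<in> (adj_rel S)\<^sup>*" "y \<noteq> d"
    using x by (auto simp: cat_moves_def reach_insert_pendant)
  show "\<exists>b\<in>cat_moves T d. cat_at (insert {u, x} S) y \<le> cat_at T b"
  proof (cases "y = x")
    case True
    \<comment> \<open>at \<open>x\<close> the cat scores \<open>1\<close>, which it matches in \<open>T\<close> at any non-isolated vertex\<close>
    then have du: "(d, u) \<in> (adj_rel S)\<^sup>*"
      using reach(1) reach_fresh(2)[OF x(1), of d] x(3) by simp
    obtain b where b: "b \<in> cat_moves T d"
    proof (cases "d = u")
      case True
      obtain w where "w \<noteq> u" "{u, w} \<in> T" using not_isolated_neighbour[OF T u] by blast
      then have "w \<in> cat_moves T d" using True by (simp add: neighbour_in_cat_moves)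
      then show ?thesis by (rule that)
    next
      case False
      then have "u \<in> cat_moves T d" using reach_mono[OF ST du] by (simp add: cat_moves_def)
      then show ?thesis by (rule that)
    qed
    have "cat_at (insert {u, x} S) x = 1"
      using S' pendant_edge_insert_fresh[OF x(1,2)] by (rule cat_at_pendant)
    moreover have "1 \<le> cat_at T b" using cat_at_ge_1[OF T not_isolated_if_cat_moves[OF b]] .
    ultimately show ?thesis using b True by auto
  next
    case False
    then have "y \<in> cat_moves T d"
      using reach reach_mono[OF ST] by (auto simp: cat_moves_def)
    then show ?thesis using le[OF y False] by blast
  qed
qed

lemma cat_at_pendant_le_edge:
  assumes "simple_edges S" "v \<notin> \<Union>S" "u \<noteq> v" "u \<noteq> w" "w \<noteq> v" "{u, w} \<notin> S" "d \<noteq> v"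
  shows "cat_at (insert {u, v} S) d \<le> cat_at (insert {u, w} S) d"
  using assms
proof (induction "card S" arbitrary: S d rule: less_induct)
  case less
  note S = less.prems(1) and v = less.prems(2)
  have A: "simple_edges (insert {u, v} S)" and B: "simple_edges (insert {u, w} S)"
    using S less.prems(3,4) by (simp_all add: simple_edges_insert)
  show ?case
  proof (cases "isolated (insert {u, v} S) d")
    case True
    then show ?thesis by (simp add: cat_at_isolated[OF A])
  next
    case False
    then have "\<not> isolated (insert {u, w} S) d" using less.prems(7) by (auto simp: isolated_def)
    then obtain f where f: "f \<in> insert {u, w} S"
      "cat_at (insert {u, w} S) d = 1 + cat_reply (insert {u, w} S - {f}) d"
      by (rule cat_at_optimal_delete[OF B])
    show ?thesis
    proof (cases "f = {u, w}")
      case True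
      have "insert {u, v} S - {{u, v}} = S" "insert {u, w} S - {f} = S"
        using v True less.prems(6) by auto
      then show ?thesis using cat_at_le_delete[OF A, of "{u, v}" d] f(2) by simp
    next
      case False
      then have fS: "f \<in> S" using f(1) by simp
      have S': "simple_edges (S - {f})" using S by (rule simple_edges_Diff)
      have "insert {u, v} S - {f} = insert {u, v} (S - {f})"
        "insert {u, w} S - {f} = insert {u, w} (S - {f})"
        using False fS v by auto
      moreover have "cat_reply (insert {u, v} (S - {f})) d \<le> cat_reply (insert {u, w} (S - {f})) d"
      proof (rule cat_reply_insert_pendant)
        show "simple_edges (insert {u, w} (S - {f}))"
          using S' less.prems(4) by (rule simple_edges_insert)
        show "\<not> isolated (insert {u, w} (S - {f})) u" by (simp add: isolated_def)
        fix y assume "y \<in> cat_moves (insert {u, v} (S - {f})) d" and yv: "y \<noteq> v"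
        show "cat_at (insert {u, v} (S - {f})) y \<le> cat_at (insert {u, w} (S - {f})) y"
          using less.hyps[OF card_delete_edge_less[OF S fS] S'] less.prems(3-6) v yv by auto
      qed (use v less.prems(3,7) in auto)
      ultimately show ?thesis using cat_at_le_delete[OF A, of f d] f(2) fS by simp
    qed
  qed
qed

lemma cat_reply_delete_edge_le_delete_pendant:
  assumes F: "simple_edges F" and uv: "pendant_edge F u v"
    and "{u, w} \<in> F" "u \<noteq> w" "w \<noteq> v" "c \<noteq> v"
  shows "cat_reply (F - {{u, w}}) c \<le> cat_reply (F - {{u, v}}) c"
proof -
  define S where "S = F - {{u, v}, {u, w}}"
  have S: "simple_edges S" using F by (simp add: S_def simple_edges_Diff)
  have v: "v \<notin> \<Union>S" "u \<noteq> v" using uv by (auto simp: S_def pendant_edge_def)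
  have "{u, v} \<noteq> {u, w}" using assms(5) by (auto simp: doubleton_eq_iff)
  then have "F - {{u, w}} = insert {u, v} S" "F - {{u, v}} = insert {u, w} S"
    using uv \<open>{u, w} \<in> F\<close> by (auto simp: S_def pendant_edge_def)
  moreover have "cat_reply (insert {u, v} S) c \<le> cat_reply (insert {u, w} S) c"
  proof (rule cat_reply_insert_pendant)
    show "simple_edges (insert {u, w} S)" using S \<open>u \<noteq> w\<close> by (rule simple_edges_insert)
    show "\<not> isolated (insert {u, w} S) u" by (simp add: isolated_def)
    fix y assume "y \<in> cat_moves (insert {u, v} S) c" and "y \<noteq> v"
    then show "cat_at (insert {u, v} S) y \<le> cat_at (insert {u, w} S) y"
      using cat_at_pendant_le_edge[OF S v(1,2)] assms(4,5) by (simp add: S_def)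
  qed (use v assms(6) in auto)
  ultimately show ?thesis by simp
qed

lemma cat_at_insert_leaf_isolated_edge:
  assumes F: "simple_edges F" and uv: "pendant_edge F u v" "pendant_edge F v u"
    and x: "x \<notin> \<Union>F" "u \<noteq> x" and "y \<noteq> x" "y \<noteq> u"
  shows "cat_at (insert {u, x} F) y \<le> cat_at F y"
proof (cases "y = v")
  case True
  have "pendant_edge (insert {u, x} F) u v"
    using uv(1) \<open>y \<noteq> x\<close> True by (intro pendant_edge_insert) (auto simp: pendant_edge_def)
  then have "cat_at (insert {u, x} F) v = 1"
    by (rule cat_at_pendant[OF simple_edges_insert[OF F x(2)]])
  then show ?thesis using cat_at_pendant[OF F uv(1)] True by simp
next
  case False
  have "(y, u) \<notin> (adj_rel F)\<^sup>*"
  proof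
    assume "(y, u) \<in> (adj_rel F)\<^sup>*"
    then have "y \<in> {u, v}" by (rule reach_isolated_edge[OF uv reach_sym])
    then show False using False \<open>y \<noteq> u\<close> by simp
  qed
  moreover have "(y, x) \<notin> (adj_rel F)\<^sup>*" using reach_fresh(2)[OF x(1)] \<open>y \<noteq> x\<close> by simp
  ultimately show ?thesis by (rule cat_at_insert_unreachable_edge[OF F x(2)])
qed

lemma cat_reply_insert_leaf_le:
  assumes F: "simple_edges F" and uv: "pendant_edge F u v"
    and x: "x \<notin> \<Union>F" "u \<noteq> x" "c \<noteq> x" and "c \<noteq> v"
    and le: "\<And>y w. {u, w} \<in> F \<Longrightarrow> w \<noteq> u \<Longrightarrow> w \<noteq> v \<Longrightarrow> y \<noteq> x \<Longrightarrow>
      cat_at (insert {u, x} F) y \<le> cat_at F y"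
  shows "cat_reply (insert {u, x} F) c \<le> cat_reply F c"
proof (rule cat_reply_insert_pendant[OF F subset_refl x])
  show "\<not> isolated F u" using pendant_edge_not_isolated[OF uv] by blast
  fix y assume y: "y \<in> cat_moves (insert {u, x} F) c" "y \<noteq> x"
  show "cat_at (insert {u, x} F) y \<le> cat_at F y"
  proof (cases "\<exists>w. {u, w} \<in> F \<and> w \<noteq> u \<and> w \<noteq> v")
    case True
    then show ?thesis using le y(2) by blast
  next
    case False
    \<comment> \<open>\<open>{u, v}\<close> is a component of \<open>F\<close>\<close>
    have vu: "pendant_edge F v u"
      using F uv False
      by (intro pendant_edge_if_unique_neighbour) (auto simp: pendant_edge_def insert_commute)
    have "y \<noteq> u"
    proof
      assume "y = u"
      then have "(c, u) \<in> (adj_rel F)\<^sup>*" "u \<noteq> c"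
        using y x by (auto simp: cat_moves_def reach_insert_pendant)
      moreover from this(1) have "c \<in> {u, v}" by (rule reach_isolated_edge[OF uv vu reach_sym])
      ultimately show False using \<open>c \<noteq> v\<close> by simp
    qed
    then show ?thesis using cat_at_insert_leaf_isolated_edge[OF F uv vu x(1,2) y(2)] by blast
  qed
qed

lemma cat_at_insert_leaf_le:
  assumes "simple_edges F" "pendant_edge F u v" "{u, w} \<in> F" "w \<noteq> u" "w \<noteq> v"
    and "x \<notin> \<Union>F" "u \<noteq> x" "c \<noteq> x"
  shows "cat_at (insert {u, x} F) c \<le> cat_at F c"
  using assms
proof (induction "card F" arbitrary: F c w rule: less_induct)
  case less
  note F = less.prems(1) and uv = less.prems(2) and x = less.prems(6-8)
  have F': "simple_edges (insert {u, x} F)" using F x(2) by (rule simple_edges_insert)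
  show ?case
  proof (cases "c = v")
    case True
    have "pendant_edge (insert {u, x} F) u v"
      using uv x(1) by (intro pendant_edge_insert) (auto simp: pendant_edge_def)
    then show ?thesis using True cat_at_pendant[OF F' _] cat_at_pendant[OF F uv] by simp
  next
    case cv: False
    have delete: "cat_at (insert {u, x} F) c \<le> 1 + cat_reply (F - {e}) c"
      if e: "e \<in> F" "e \<noteq> {u, v}" for e
    proof -
      have F1: "simple_edges (F - {e})" using F by (rule simple_edges_Diff)
      have uv1: "pendant_edge (F - {e}) u v" using uv e(2) by (rule pendant_edge_Diff)
      have "cat_reply (insert {u, x} (F - {e})) c \<le> cat_reply (F - {e}) c"
        using less.hyps[OF card_delete_edge_less[OF F e(1)] F1 uv1] x
        by (intro cat_reply_insert_leaf_le[OF F1 uv1 _ x(2,3) cv]) auto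
      moreover have "insert {u, x} F - {e} = insert {u, x} (F - {e})" using e(1) x(1) by auto
      ultimately show ?thesis using cat_at_le_delete[OF F', of e c] e(1) by simp
    qed
    show ?thesis
    proof (cases "isolated F c")
      case True
      then have "isolated (insert {u, x} F) c"
        using pendant_edge_not_isolated[OF uv] x(3) by (auto simp: isolated_def)
      then show ?thesis by (simp add: cat_at_isolated[OF F'])
    next
      case False
      then obtain e where e: "e \<in> F" "cat_at F c = 1 + cat_reply (F - {e}) c"
        by (rule cat_at_optimal_delete[OF F])
      show ?thesis
      proof (cases "e = {u, v}")
        case True
        have "{u, w} \<noteq> {u, v}" using less.prems(5) by (auto simp: doubleton_eq_iff)
        with less.prems(3) have "cat_at (insert {u, x} F) c \<le> 1 + cat_reply (F - {{u, w}}) c"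
          by (rule delete)
        also have "\<dots> \<le> 1 + cat_reply (F - {{u, v}}) c"
          using cat_reply_delete_edge_le_delete_pendant[OF F uv less.prems(3)] less.prems(4,5) cv
          by simp
        finally show ?thesis using e True by simp
      next
        case False
        then show ?thesis using delete e by simp
      qed
    qed
  qed
qed

lemma cat_num_insert_vertex:
  assumes "finite V" "u \<in> V" "1 \<le> cat_at E u"
    and "cat_at E' x = 1" "\<And>a. a \<in> V \<Longrightarrow> cat_at E' a = cat_at E a"
  shows "cat_num (insert x V) E' = cat_num V E"
proof -
  have "cat_at E' ` V = cat_at E ` V" using assms(5) by (rule image_cong[OF refl])
  then have image_eq: "cat_at E' ` insert x V = insert 1 (cat_at E ` V)" using assms(4) by simp
  have "cat_at E u \<le> Max (cat_at E ` V)" using assms(1,2) by simp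
  then have "1 \<le> Max (cat_at E ` V)" using assms(3) by linarith
  then show ?thesis
    unfolding cat_num_def image_eq using assms(1,2) by (subst Max_insert) (auto simp: max_def)
qed

theorem mainTheorem3:
  fixes V :: "'a set" and E :: "'a set set" and u v x :: 'a
  assumes "simple_graph V E"
    and "connected_graph V E"
    and "{u, v} \<in> E"
    and "degree E u \<ge> 2"
    and "degree E v = 1"
    and "x \<notin> V"
  shows "(\<forall>a\<in>V. cat_at (insert {u, x} E) a = cat_at E a)
         \<and> cat_at (insert {u, x} E) x = 1
         \<and> cat_num (insert x V) (insert {u, x} E) = cat_num V E"
proof -
  have E: "simple_edges E" and "\<Union>E \<subseteq> V" using assms(1) by (rule simple_graph_simple_edges)+
  with assms(3,6) have x: "x \<notin> \<Union>E" "u \<noteq> x" and "u \<in> V" by auto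
  have uv: "pendant_edge E u v" using E assms(3,5) by (rule pendant_edge_if_degree_1)
  obtain w where w: "{u, w} \<in> E" "w \<noteq> u" "w \<noteq> v" using assms(4) by (rule degree_ge_2_other_neighbour)
  have same: "cat_at (insert {u, x} E) a = cat_at E a" if "a \<in> V" for a
  proof (rule antisym)
    show "cat_at (insert {u, x} E) a \<le> cat_at E a"
      by (rule cat_at_insert_leaf_le[OF E uv w x]) (use that assms(6) in blast)
    show "cat_at E a \<le> cat_at (insert {u, x} E) a"
      by (rule cat_at_mono[OF simple_edges_insert[OF E x(2)] subset_insertI])
  qed
  have leaf: "cat_at (insert {u, x} E) x = 1"
    by (rule cat_at_pendant[OF simple_edges_insert[OF E x(2)] pendant_edge_insert_fresh[OF x]])
  have "cat_num (insert x V) (insert {u, x} E) = cat_num V E"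
  proof (rule cat_num_insert_vertex[OF _ \<open>u \<in> V\<close> _ leaf same])
    show "finite V" using assms(1) by (simp add: simple_graph_def)
    show "1 \<le> cat_at E u" using cat_at_ge_1[OF E] pendant_edge_not_isolated[OF uv] by blast
  qed
  then show ?thesis using same leaf by blast
qed

end
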